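(* Let $f: S^1 \rightarrow S^1$ be a Morse-Smale diffeomorphism of the unit circle. Then the induced continuum map $C(f): C(S^1) \rightarrow C(S^1)$ does not have the shadowing property.
   Context: A $C^r$ diffeomorphism ($r\ge 1$) $f$ of a compact connected manifold without boundary is Morse-Smale if its nonwandering set $\Omega(f)$ consists of finitely many periodic points, all hyperbolic, and the stable and unstable manifolds of these periodic points are all mutually transversal. For a compact metric space $X$, $C(X)$ denotes the hyperspace of all nonempty compact connected subsets (subcontinua) of $X$ with the Hausdorff metric $d_H(A,B)=\inf\{\varepsilon>0: A\subset V(B,\varepsilon),\ B\subset V(A,\varepsilon)\}$, where $V(A,r)=\{x: d(x,A)<r\}$; the induced map is $C(f)(A)=f(A)$. A homeomorphism $g$ of a compact metric space $(Y,\rho)$ has the shadowing property if for every $\varepsilon>0$ there is $\delta>0$ such that every sequence $(y_n)_{n\in\mathbb{Z}}$ with $\rho(g(y_n),y_{n+1})\le\delta$ for all $n$ admits $y\in Y$ with $\rho(y_n,g^n(y))<\varepsilon$ for all $n\in\mathbb{Z}$. *)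

theory Defs
  imports "HOL-Analysis.Analysis"
begin

(* The unit circle S^1, as a subset of the complex plane, with the induced (chordal) metric. *)
definition S1 :: "complex set" where
  "S1 = sphere 0 1"

(* A C^1 diffeomorphism of S^1 (C^r with r >= 1 is covered by the case r = 1):
   f restricts to a bijection of S^1, the parametrised map t |-> f(cis t) is
   continuously differentiable, and its derivative (velocity) never vanishes
   (so the inverse is C^1 as well). *)
definition circle_C1_diffeo :: "(complex \<Rightarrow> complex) \<Rightarrow> bool" where
  "circle_C1_diffeo f \<longleftrightarrow>
     bij_betw f S1 S1 \<and>
     (\<forall>t. (\<lambda>s. f (cis s)) differentiable (at t)) \<and>
     continuous_on UNIV (\<lambda>t. vector_derivative (\<lambda>s. f (cis s)) (at t)) \<and>
     (\<forall>t. vector_derivative (\<lambda>s. f (cis s)) (at t) \<noteq> 0)"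

(* Derivative of a circle map g at p in S^1, with respect to the unit-speed
   (arclength) coordinate on S^1: d/dt g(cis t) at t = Arg p equals
   (circ_deriv g p) * i * g p. *)
definition circ_deriv :: "(complex \<Rightarrow> complex) \<Rightarrow> complex \<Rightarrow> real" where
  "circ_deriv g p = Re (vector_derivative (\<lambda>s. g (cis s)) (at (Arg p)) / (\<i> * g p))"

definition periodic_pt :: "(complex \<Rightarrow> complex) \<Rightarrow> complex \<Rightarrow> bool" where
  "periodic_pt f p \<longleftrightarrow> p \<in> S1 \<and> (\<exists>n\<ge>1. (f ^^ n) p = p)"

definition per :: "(complex \<Rightarrow> complex) \<Rightarrow> complex \<Rightarrow> nat" where
  "per f p = (LEAST n. n \<ge> 1 \<and> (f ^^ n) p = p)"

definition multiplier :: "(complex \<Rightarrow> complex) \<Rightarrow> complex \<Rightarrow> real" where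
  "multiplier f p = circ_deriv (f ^^ per f p) p"

definition hyperbolic_pt :: "(complex \<Rightarrow> complex) \<Rightarrow> complex \<Rightarrow> bool" where
  "hyperbolic_pt f p \<longleftrightarrow> periodic_pt f p \<and> \<bar>multiplier f p\<bar> \<noteq> 1"

definition nonwandering :: "(complex \<Rightarrow> complex) \<Rightarrow> complex set" where
  "nonwandering f = {x \<in> S1. \<forall>U. open U \<and> x \<in> U \<longrightarrow>
       (\<exists>n\<ge>1. (f ^^ n) ` (U \<inter> S1) \<inter> (U \<inter> S1) \<noteq> {})}"

definition stable_set :: "(complex \<Rightarrow> complex) \<Rightarrow> complex \<Rightarrow> complex set" where
  "stable_set f p = {x \<in> S1. (\<lambda>k. dist ((f ^^ k) x) ((f ^^ k) p)) \<longlonglongrightarrow> 0}"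

definition unstable_set :: "(complex \<Rightarrow> complex) \<Rightarrow> complex \<Rightarrow> complex set" where
  "unstable_set f p = {x \<in> S1.
     (\<lambda>k. dist ((inv_into S1 f ^^ k) x) ((inv_into S1 f ^^ k) p)) \<longlonglongrightarrow> 0}"

definition dim_unstable :: "(complex \<Rightarrow> complex) \<Rightarrow> complex \<Rightarrow> nat" where
  "dim_unstable f p = (if \<bar>multiplier f p\<bar> > 1 then 1 else 0)"

definition dim_stable :: "(complex \<Rightarrow> complex) \<Rightarrow> complex \<Rightarrow> nat" where
  "dim_stable f p = (if \<bar>multiplier f p\<bar> < 1 then 1 else 0)"

(* Transversality of W^u(p) and W^s(q) on S^1: at every intersection point the
   tangent spaces (subspaces of the 1-dimensional tangent line) must span it,
   i.e. at least one of them is 1-dimensional. *)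
definition transversal :: "(complex \<Rightarrow> complex) \<Rightarrow> complex \<Rightarrow> complex \<Rightarrow> bool" where
  "transversal f p q \<longleftrightarrow>
     (unstable_set f p \<inter> stable_set f q \<noteq> {} \<longrightarrow> dim_unstable f p + dim_stable f q \<ge> 1)"

definition morse_smale_circle :: "(complex \<Rightarrow> complex) \<Rightarrow> bool" where
  "morse_smale_circle f \<longleftrightarrow>
     circle_C1_diffeo f \<and>
     finite (nonwandering f) \<and>
     (\<forall>p \<in> nonwandering f. periodic_pt f p \<and> hyperbolic_pt f p) \<and>
     (\<forall>p \<in> nonwandering f. \<forall>q \<in> nonwandering f. transversal f p q \<and> transversal f q p)"

definition nbhd :: "'a::metric_space set \<Rightarrow> real \<Rightarrow> 'a set" where
  "nbhd A r = {x. infdist x A < r}"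

definition hausdorff_dist :: "'a::metric_space set \<Rightarrow> 'a set \<Rightarrow> real" where
  "hausdorff_dist A B = Inf {e. e > 0 \<and> A \<subseteq> nbhd B e \<and> B \<subseteq> nbhd A e}"

definition continua :: "'a::metric_space set \<Rightarrow> 'a set set" where
  "continua X = {A. A \<subseteq> X \<and> A \<noteq> {} \<and> compact A \<and> connected A}"

definition iter_int :: "'a set \<Rightarrow> ('a \<Rightarrow> 'a) \<Rightarrow> int \<Rightarrow> 'a \<Rightarrow> 'a" where
  "iter_int Y g n = (if n \<ge> 0 then g ^^ nat n else inv_into Y g ^^ nat (- n))"

definition shadowing :: "'a set \<Rightarrow> ('a \<Rightarrow> 'a \<Rightarrow> real) \<Rightarrow> ('a \<Rightarrow> 'a) \<Rightarrow> bool" where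
  "shadowing Y \<rho> g \<longleftrightarrow>
     (\<forall>\<epsilon>>0. \<exists>\<delta>>0. \<forall>y :: int \<Rightarrow> 'a.
        (\<forall>n. y n \<in> Y) \<and> (\<forall>n. \<rho> (g (y n)) (y (n + 1)) \<le> \<delta>) \<longrightarrow>
        (\<exists>x\<in>Y. \<forall>n. \<rho> (y n) (iter_int Y g n x) < \<epsilon>))"

end

(*
  A Morse-Smale circle diffeomorphism f has a periodic source p and a periodic sink q: if every
  periodic point were a sink, every orbit would enter one of finitely many small basins around
  the attracting orbits, and by compactness the surjection f^M would squeeze the whole circle
  into a small neighbourhood of these finitely many orbits.

  Consider the pseudo-orbit of subcontinua that follows the backward orbit of a long arc K
  missing q, jumps at time T to the whole circle, and then follows the forward orbit of a long
  arc L missing p. If a continuum x shadowed it, f^T(x) would be a connected, almost dense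
  subset of the circle. It misses q: a point of x near q would, after T steps towards the sink,
  lie in K but closer to q than K is. Symmetrically it misses p. But p and q cut the circle into
  two arcs, and a connected set coming close to every point must cross from one arc to the other.
*)
theory Submission
  imports Defs
begin

section \<open>The circle and derivatives of circle maps\<close>

lemma in_S1_iff: "z \<in> S1 \<longleftrightarrow> cmod z = 1"
  by (simp add: S1_def)

lemma S1_nonzero: "z \<in> S1 \<Longrightarrow> z \<noteq> 0"
  by (auto simp: in_S1_iff)

lemma cis_in_S1 [simp]: "cis t \<in> S1"
  by (simp add: in_S1_iff)

lemma cis_Arg_S1: "z \<in> S1 \<Longrightarrow> cis (Arg z) = z"
  by (simp add: cis_Arg S1_nonzero sgn_div_norm in_S1_iff)

lemma divide_in_S1: "z \<in> S1 \<Longrightarrow> w \<in> S1 \<Longrightarrow> z / w \<in> S1"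
  by (simp add: in_S1_iff norm_divide)

lemma cis_Arg_divide: "p \<in> S1 \<Longrightarrow> z \<in> S1 \<Longrightarrow> cis (Arg p + Arg (z / p)) = z"
  by (simp add: cis_mult [symmetric] cis_Arg_S1 divide_in_S1 S1_nonzero)

lemma compact_S1: "compact S1"
  by (simp add: S1_def)

lemma connected_S1: "connected S1"
  by (simp add: S1_def connected_sphere_eq)

lemma S1_in_continua: "S1 \<in> continua S1"
  using compact_S1 connected_S1 cis_in_S1[of 0] by (auto simp: continua_def)

lemma infinite_S1: "infinite S1"
proof
  assume "finite S1"
  then obtain a where "S1 = {a}"
    using connected_finite_iff_sing[OF connected_S1] S1_in_continua by (auto simp: continua_def)
  moreover have "1 \<in> S1" "-1 \<in> S1"
    by (simp_all add: in_S1_iff)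
  ultimately have "(1::complex) = -1"
    by (metis singletonD)
  then show False
    by simp
qed

lemma isCont_Arg_divide: "p \<noteq> 0 \<Longrightarrow> isCont (\<lambda>z. Arg (z / p)) p"
  by (rule continuous_at_compose[of _ "\<lambda>z. z / p" Arg, unfolded o_def])
     (auto intro!: continuous_intros continuous_at_Arg simp: complex_nonpos_Reals_iff)

lemma has_vector_derivative_cis: "(cis has_vector_derivative \<i> * cis t) (at t)"
  unfolding has_vector_derivative_complex_iff
  by (auto intro!: derivative_eq_intros simp: cis.sel)

lemma continuous_on_S1_if_cis:
  assumes "\<And>t. isCont (\<lambda>s. h (cis s)) t"
  shows "continuous_on S1 h"
  unfolding continuous_on_eq_continuous_within
proof
  fix p assume p: "p \<in> S1"
  have "isCont (\<lambda>z. Arg p + Arg (z / p)) p"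
    using isCont_Arg_divide[OF S1_nonzero[OF p]] by (intro continuous_intros)
  then have "isCont (\<lambda>z. h (cis (Arg p + Arg (z / p)))) p"
    using assms by (rule isCont_o2)
  then show "continuous (at p within S1) h"
    by (rule continuous_transform_within[of _ _ _ 1, OF continuous_at_imp_continuous_within])
       (auto simp: p cis_Arg_divide)
qed

text \<open>The angle function is a branch of the logarithm centred at \<open>G t\<close>.\<close>
lemma S1_path_lift:
  fixes G :: "real \<Rightarrow> complex"
  assumes G: "\<And>s. G s \<in> S1" and "G differentiable (at t)"
  obtains \<theta> where "\<theta> differentiable (at t)" "\<And>s. cis (\<theta> s) = G s"
proof
  define \<theta> where "\<theta> s = Arg (G t) + Im (Ln (G s / G t))" for s
  obtain v where v: "(G has_vector_derivative v) (at t)"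
    using assms(2) vector_derivative_works by blast
  have "((\<lambda>s. G s / G t) has_vector_derivative v / G t) (at t)"
    using v by (auto intro!: derivative_eq_intros simp: divide_inverse)
  moreover have "(Ln has_field_derivative inverse 1) (at ((\<lambda>s. G s / G t) t))"
    using G[of t] S1_nonzero has_field_derivative_Ln[of 1] by (simp add: complex_nonpos_Reals_iff)
  ultimately have "((Ln \<circ> (\<lambda>s. G s / G t)) has_vector_derivative v / G t * inverse 1) (at t)"
    by (rule field_vector_diff_chain_at)
  then have "(\<theta> has_real_derivative Im (v / G t)) (at t)"
    unfolding \<theta>_def by (auto intro!: derivative_eq_intros simp: o_def)
  then show "\<theta> differentiable (at t)"
    by (rule differentiableI[OF has_field_derivative_imp_has_derivative])
  show "cis (\<theta> s) = G s" for s
  proof -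
    have "G s / G t \<in> S1"
      by (rule divide_in_S1[OF G G])
    then have "Ln (G s / G t) = \<i> * Arg (G s / G t)"
      by (simp add: Ln_Arg[OF S1_nonzero] in_S1_iff)
    then show ?thesis
      using cis_Arg_divide[OF G G] by (simp add: \<theta>_def)
  qed
qed

lemma S1_map_compose_differentiable:
  fixes G :: "real \<Rightarrow> complex"
  assumes "\<And>s. G s \<in> S1" "G differentiable (at t)"
    and h: "\<And>s. (\<lambda>s. h (cis s)) differentiable (at s)"
  shows "(\<lambda>s. h (G s)) differentiable (at t)"
proof -
  obtain \<theta> where \<theta>: "\<theta> differentiable (at t)" "\<And>s. cis (\<theta> s) = G s"
    using S1_path_lift assms(1,2) by blast
  have "((\<lambda>s. h (cis s)) \<circ> \<theta>) differentiable (at t)"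
    using \<theta>(1) h by (rule differentiable_chain_at)
  then show ?thesis
    by (simp add: o_def \<theta>(2))
qed

text \<open>The velocity of a path in the circle is tangent to the circle.\<close>
lemma S1_path_velocity:
  fixes G :: "real \<Rightarrow> complex"
  assumes G: "\<And>s. G s \<in> S1" and v: "(G has_vector_derivative v) (at t)"
  shows "cmod v = \<bar>Re (v / (\<i> * G t))\<bar>"
proof -
  have "((\<lambda>s. G s * cnj (G s)) has_vector_derivative G t * cnj v + v * cnj (G t)) (at t)"
    by (intro has_vector_derivative_mult v has_vector_derivative_cnj)
  moreover have "(\<lambda>s. G s * cnj (G s)) = (\<lambda>s. 1)"
    using G by (simp add: complex_norm_square[symmetric] in_S1_iff)
  ultimately have "G t * cnj v + v * cnj (G t) = 0"
    using vector_derivative_unique_at has_vector_derivative_const by metis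
  then have "v * cnj (G t) + cnj (v * cnj (G t)) = 0"
    by (simp add: algebra_simps)
  then have "complex_of_real (2 * Re (v * cnj (G t))) = 0"
    by (simp only: complex_add_cnj)
  then have "Re (v * cnj (G t)) = 0"
    by (simp only: of_real_eq_0_iff)
  moreover have "v / (\<i> * G t) = - \<i> * (v * cnj (G t))"
  proof -
    have "G t * cnj (G t) = 1"
      using G[of t] by (simp add: complex_norm_square[symmetric] in_S1_iff)
    then have "inverse (G t) = cnj (G t)"
      by (rule inverse_unique)
    then show ?thesis
      by (simp add: divide_inverse mult_ac)
  qed
  moreover have "cmod (v * cnj (G t)) = cmod v"
    using G[of t] by (simp add: norm_mult in_S1_iff)
  ultimately show ?thesis
    by (simp add: cmod_def)
qed

lemma has_vector_derivative_norm_quotient: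
  assumes "(H has_vector_derivative v) (at t)"
  shows "((\<lambda>s. cmod (H s - H t) / \<bar>s - t\<bar>) \<longlongrightarrow> cmod v) (at t)"
proof -
  have "((\<lambda>s. cmod (H s - H t - (s - t) *\<^sub>R v) / \<bar>s - t\<bar>) \<longlongrightarrow> 0) (at t)"
    using assms by (simp add: has_vector_derivative_def has_derivative_iff_norm)
  then have "((\<lambda>s. (H s - H t) /\<^sub>R (s - t) - v) \<longlongrightarrow> 0) (at t)"
  proof (rule tendsto_norm_zero_cancel[OF Lim_transform_eventually])
    show "\<forall>\<^sub>F s in at t. cmod (H s - H t - (s - t) *\<^sub>R v) / \<bar>s - t\<bar>
        = norm ((H s - H t) /\<^sub>R (s - t) - v)"
    proof (rule eventually_at_filter[THEN iffD2, OF always_eventually], intro allI impI)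
      fix s assume "s \<noteq> t"
      then have "(H s - H t) /\<^sub>R (s - t) - v = (H s - H t - (s - t) *\<^sub>R v) /\<^sub>R (s - t)"
        by (simp add: scaleR_diff_right)
      then show "cmod (H s - H t - (s - t) *\<^sub>R v) / \<bar>s - t\<bar> = norm ((H s - H t) /\<^sub>R (s - t) - v)"
        by (simp add: divide_inverse_commute)
    qed
  qed
  then have "((\<lambda>s. cmod ((H s - H t) /\<^sub>R (s - t))) \<longlongrightarrow> cmod v) (at t)"
    by (intro tendsto_norm) (simp add: LIM_zero_iff)
  moreover have "cmod ((H s - H t) /\<^sub>R (s - t)) = cmod (H s - H t) / \<bar>s - t\<bar>" for s
    by (simp add: divide_inverse mult.commute)
  ultimately show ?thesis
    by simp
qed

lemma filterlim_Arg_chart: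
  assumes "p \<in> S1"
  shows "filterlim (\<lambda>z. Arg p + Arg (z / p)) (at (Arg p)) (at p within S1)"
proof (rule filterlim_atI)
  have "isCont (\<lambda>z. Arg p + Arg (z / p)) p"
    using isCont_Arg_divide[OF S1_nonzero[OF assms]] by (intro continuous_intros)
  then show "((\<lambda>z. Arg p + Arg (z / p)) \<longlongrightarrow> Arg p) (at p within S1)"
    using S1_nonzero[OF assms] by (simp add: isCont_def tendsto_within_subset[OF _ subset_UNIV])
  have "Arg p + Arg (z / p) \<noteq> Arg p" if "z \<in> S1" "z \<noteq> p" for z
    using cis_Arg_divide[OF assms that(1)] cis_Arg_S1[OF assms] that(2) by force
  then show "\<forall>\<^sub>F z in at p within S1. Arg p + Arg (z / p) \<noteq> Arg p"
    unfolding eventually_at_filter by (auto intro: always_eventually)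
qed

lemma S1_map_dist_ratio:
  assumes g: "g ` S1 \<subseteq> S1" and diff: "(\<lambda>s. g (cis s)) differentiable (at (Arg p))"
    and p: "p \<in> S1"
  shows "((\<lambda>z. dist (g z) (g p) / dist z p) \<longlongrightarrow> \<bar>circ_deriv g p\<bar>) (at p within S1)"
proof -
  define H where "H = (\<lambda>s. g (cis s))"
  define s0 where "s0 = Arg p"
  define \<theta> where "\<theta> = (\<lambda>z. s0 + Arg (z / p))"
  define v where "v = vector_derivative H (at s0)"
  have Hv: "(H has_vector_derivative v) (at s0)"
    using diff by (simp add: H_def s0_def v_def vector_derivative_works[symmetric])
  have cis_s0: "cis s0 = p"
    using p by (simp add: s0_def cis_Arg_S1)
  have "cmod v = \<bar>Re (v / (\<i> * H s0))\<bar>"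
    by (rule S1_path_velocity[OF _ Hv]) (use g in \<open>auto simp: H_def\<close>)
  then have v: "cmod v = \<bar>circ_deriv g p\<bar>"
    by (simp add: circ_deriv_def H_def v_def s0_def cis_s0 flip: s0_def)
  have cis_\<theta>: "cis (\<theta> z) = z" if "z \<in> S1" for z
    using cis_Arg_divide[OF p that] by (simp add: \<theta>_def s0_def)
  have \<theta>_lim: "filterlim \<theta> (at s0) (at p within S1)"
    using filterlim_Arg_chart[OF p] by (simp add: \<theta>_def s0_def)
  have "((\<lambda>t. (cmod (H t - H s0) / \<bar>t - s0\<bar>) / (cmod (cis t - cis s0) / \<bar>t - s0\<bar>))
      \<longlongrightarrow> cmod v / cmod (\<i> * cis s0)) (at s0)"
    by (intro tendsto_divide has_vector_derivative_norm_quotient Hv has_vector_derivative_cis)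
       (simp add: norm_mult)
  then have lim: "((\<lambda>z. (cmod (H (\<theta> z) - H s0) / \<bar>\<theta> z - s0\<bar>) / (cmod (cis (\<theta> z) - cis s0) / \<bar>\<theta> z - s0\<bar>))
      \<longlongrightarrow> \<bar>circ_deriv g p\<bar>) (at p within S1)"
    using filterlim_compose[OF _ \<theta>_lim] by (simp add: norm_mult v)
  have eq: "(cmod (H (\<theta> z) - H s0) / \<bar>\<theta> z - s0\<bar>) / (cmod (cis (\<theta> z) - cis s0) / \<bar>\<theta> z - s0\<bar>)
      = dist (g z) (g p) / dist z p" if "z \<in> S1" "z \<noteq> p" for z
  proof -
    have "\<theta> z \<noteq> s0"
      using that cis_\<theta> cis_s0 by metis
    then show ?thesis
      using that by (simp add: H_def cis_\<theta> cis_s0 dist_norm)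
  qed
  have "\<forall>\<^sub>F z in at p within S1. (cmod (H (\<theta> z) - H s0) / \<bar>\<theta> z - s0\<bar>) /
      (cmod (cis (\<theta> z) - cis s0) / \<bar>\<theta> z - s0\<bar>) = dist (g z) (g p) / dist z p"
    unfolding eventually_at_filter by (rule always_eventually) (blast intro: eq)
  with lim show ?thesis
    by (rule Lim_transform_eventually)
qed

section \<open>Contracting fixed points\<close>

definition contracting_at :: "'a::metric_space set \<Rightarrow> ('a \<Rightarrow> 'a) \<Rightarrow> 'a \<Rightarrow> bool" where
  "contracting_at S g c \<longleftrightarrow>
     (\<exists>\<rho>>0. \<exists>l. 0 \<le> l \<and> l < 1 \<and> (\<forall>z\<in>S. dist z c < \<rho> \<longrightarrow> dist (g z) c \<le> l * dist z c))"

lemma contracting_atI_dist_ratio: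
  assumes "g c = c" and lim: "((\<lambda>z. dist (g z) c / dist z c) \<longlongrightarrow> L) (at c within S)" and "L < 1"
  shows "contracting_at S g c"
proof -
  define l where "l = (max L 0 + 1) / 2"
  have l: "0 \<le> l" "l < 1" "L < l"
    using \<open>L < 1\<close> by (auto simp: l_def)
  obtain \<rho> where "\<rho> > 0" and \<rho>: "\<And>z. z \<in> S \<Longrightarrow> z \<noteq> c \<Longrightarrow> dist z c < \<rho> \<Longrightarrow> dist (g z) c / dist z c < l"
    using order_tendstoD(2)[OF lim \<open>L < l\<close>] unfolding eventually_at by blast
  have "dist (g z) c \<le> l * dist z c" if "z \<in> S" "dist z c < \<rho>" for z
    using \<rho>[OF that(1) _ that(2)] \<open>g c = c\<close> by (cases "z = c") (auto simp: divide_less_eq)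
  then show ?thesis
    unfolding contracting_at_def using \<open>\<rho> > 0\<close> l by blast
qed

lemma contracting_at_inverse:
  assumes "g c = c" and lim: "((\<lambda>z. dist (g z) c / dist z c) \<longlongrightarrow> L) (at c within S)" and "L > 1"
    and h: "continuous_on S h" "h ` S \<subseteq> S" "h c = c" "c \<in> S" and inv: "\<And>z. z \<in> S \<Longrightarrow> g (h z) = z"
  shows "contracting_at S h c"
proof -
  define l where "l = (L + 1) / 2"
  have l: "1 < l" "l < L"
    using \<open>L > 1\<close> by (auto simp: l_def)
  obtain d where "d > 0" and d: "\<And>w. w \<in> S \<Longrightarrow> w \<noteq> c \<Longrightarrow> dist w c < d \<Longrightarrow> l < dist (g w) c / dist w c"
    using order_tendstoD(1)[OF lim \<open>l < L\<close>] unfolding eventually_at by blast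
  obtain \<rho> where "\<rho> > 0" and \<rho>: "\<And>z. z \<in> S \<Longrightarrow> dist z c < \<rho> \<Longrightarrow> dist (h z) (h c) < d"
    using h(1) \<open>c \<in> S\<close> \<open>d > 0\<close> unfolding continuous_on_iff by blast
  have "dist (h z) c \<le> inverse l * dist z c" if "z \<in> S" "dist z c < \<rho>" for z
  proof (cases "h z = c")
    case False
    have "l * dist (h z) c < dist (g (h z)) c"
      using d[of "h z"] \<rho>[OF that] False h(2,3) that(1) by (auto simp: less_divide_eq)
    then show ?thesis
      using inv[OF that(1)] l by (simp add: field_simps)
  qed (use l in simp)
  moreover have "0 \<le> inverse l" "inverse l < 1"
    using l by (auto simp: inverse_less_1_iff)
  ultimately show ?thesis
    unfolding contracting_at_def using \<open>\<rho> > 0\<close> by blast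
qed

lemma continuous_on_funpow:
  assumes "continuous_on S g" "g ` S \<subseteq> S"
  shows "continuous_on S (g ^^ n)"
proof (induction n)
  case (Suc n)
  have "(g ^^ n) ` S \<subseteq> S"
    using assms(2) by (induction n) auto
  then show ?case
    using Suc by (simp add: continuous_on_compose2[OF assms(1)])
qed simp

lemma contracting_funpow_dist:
  assumes "g ` S \<subseteq> S" "0 \<le> l" "l \<le> 1" and contr: "\<forall>z\<in>S. dist z c < \<rho> \<longrightarrow> dist (g z) c \<le> l * dist z c"
    and "z \<in> S" "dist z c < \<rho>"
  shows "(g ^^ j) z \<in> S \<and> dist ((g ^^ j) z) c \<le> l ^ j * dist z c"
proof (induction j)
  case (Suc j)
  have "l ^ j * dist z c \<le> dist z c"
    using assms(2,3) by (simp add: mult_left_le_one_le power_le_one)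
  then have "dist (g ((g ^^ j) z)) c \<le> l * dist ((g ^^ j) z) c"
    using Suc contr assms(6) by auto
  also have "\<dots> \<le> l * (l ^ j * dist z c)"
    using Suc assms(2) by (intro mult_left_mono) auto
  finally show ?case
    using Suc assms(1) by auto
qed (use assms in simp)

lemma contracting_at_uniform_attraction:
  assumes "contracting_at S g c" "g ` S \<subseteq> S"
  obtains \<rho> where "\<rho> > 0"
    and "\<And>r. r > 0 \<Longrightarrow> \<forall>\<^sub>F j in sequentially. \<forall>z\<in>S. dist z c < \<rho> \<longrightarrow> dist ((g ^^ j) z) c < r"
proof -
  obtain \<rho> l where "\<rho> > 0" "0 \<le> l" "l < 1" and contr: "\<forall>z\<in>S. dist z c < \<rho> \<longrightarrow> dist (g z) c \<le> l * dist z c"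
    using assms(1) unfolding contracting_at_def by blast
  have "\<forall>\<^sub>F j in sequentially. \<forall>z\<in>S. dist z c < \<rho> \<longrightarrow> dist ((g ^^ j) z) c < r" if "r > 0" for r
  proof -
    have "(\<lambda>j. l ^ j * \<rho>) \<longlonglongrightarrow> 0 * \<rho>"
      using \<open>0 \<le> l\<close> \<open>l < 1\<close> by (intro tendsto_mult LIMSEQ_power_zero) auto
    then have "\<forall>\<^sub>F j in sequentially. l ^ j * \<rho> < r"
      using that by (simp add: order_tendstoD(2))
    then show ?thesis
    proof eventually_elim
      case (elim j)
      have "dist ((g ^^ j) z) c < r" if "z \<in> S" "dist z c < \<rho>" for z
      proof -
        have "dist ((g ^^ j) z) c \<le> l ^ j * dist z c"
          using contracting_funpow_dist[OF assms(2) \<open>0 \<le> l\<close> _ contr that] \<open>l < 1\<close> by simp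
        also have "\<dots> \<le> l ^ j * \<rho>"
          using that \<open>0 \<le> l\<close> by (intro mult_left_mono) auto
        finally show ?thesis
          using elim by simp
      qed
      then show ?case
        by blast
    qed
  qed
  then show ?thesis
    using \<open>\<rho> > 0\<close> that by blast
qed

lemma uniform_attraction_escape_time:
  assumes attr: "\<And>r. r > 0 \<Longrightarrow> \<forall>\<^sub>F j in sequentially. \<forall>z\<in>S. dist z c < \<rho> \<longrightarrow> dist (((g ^^ n) ^^ j) z) c < r"
    and "(g ^^ n) c = c" "0 < n" "closed K" "K \<noteq> {}" "c \<notin> K"
  obtains T where "0 < T" "(g ^^ T) c = c" "\<And>z. z \<in> S \<Longrightarrow> dist z c < \<rho> \<Longrightarrow> dist ((g ^^ T) z) c < infdist c K"
proof -
  have "infdist c K > 0"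
    using assms(4-6) by (rule infdist_pos_not_in_closed)
  then obtain j where j: "\<forall>k\<ge>j. \<forall>z\<in>S. dist z c < \<rho> \<longrightarrow> dist (((g ^^ n) ^^ k) z) c < infdist c K"
    using attr unfolding eventually_sequentially by blast
  show ?thesis
  proof (rule that[of "n * Suc j"])
    show "0 < n * Suc j"
      using \<open>0 < n\<close> by simp
    show "(g ^^ (n * Suc j)) c = c"
      using funpow_mod_eq[OF assms(2), of "n * Suc j"] by simp
    show "dist ((g ^^ (n * Suc j)) z) c < infdist c K" if "z \<in> S" "dist z c < \<rho>" for z
      using j[rule_format, of "Suc j" z] that by (simp add: funpow_mult)
  qed
qed

lemma funpow_near_finitely_many:
  assumes \<phi>: "continuous_on S \<phi>" "\<phi> ` S \<subseteq> S" and "p \<in> S" "\<eta> > 0"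
  obtains d where "d > 0" "\<And>z r. z \<in> S \<Longrightarrow> dist z p < d \<Longrightarrow> r < N \<Longrightarrow> dist ((\<phi> ^^ r) z) ((\<phi> ^^ r) p) < \<eta>"
proof -
  have "\<forall>r\<in>{..<N}. \<forall>\<^sub>F z in at p within S. dist ((\<phi> ^^ r) z) ((\<phi> ^^ r) p) < \<eta>"
  proof
    fix r
    have "((\<phi> ^^ r) \<longlongrightarrow> (\<phi> ^^ r) p) (at p within S)"
      using continuous_on_funpow[OF \<phi>] \<open>p \<in> S\<close> by (simp add: continuous_on_def)
    then show "\<forall>\<^sub>F z in at p within S. dist ((\<phi> ^^ r) z) ((\<phi> ^^ r) p) < \<eta>"
      using \<open>\<eta> > 0\<close> by (rule tendstoD)
  qed
  then have "\<forall>\<^sub>F z in at p within S. \<forall>r\<in>{..<N}. dist ((\<phi> ^^ r) z) ((\<phi> ^^ r) p) < \<eta>"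
    by (intro eventually_ball_finite) auto
  then obtain d where "d > 0"
    and d: "\<And>z r. z \<in> S \<Longrightarrow> z \<noteq> p \<Longrightarrow> dist z p < d \<Longrightarrow> r < N \<Longrightarrow> dist ((\<phi> ^^ r) z) ((\<phi> ^^ r) p) < \<eta>"
    unfolding eventually_at by auto
  have "dist ((\<phi> ^^ r) z) ((\<phi> ^^ r) p) < \<eta>" if "z \<in> S" "dist z p < d" "r < N" for z r
    using d[OF that(1) _ that(2,3)] \<open>\<eta> > 0\<close> by (cases "z = p") auto
  with \<open>d > 0\<close> show ?thesis
    using that by blast
qed

lemma contracting_periodic_orbit_stable:
  assumes \<phi>: "continuous_on S \<phi>" "\<phi> ` S \<subseteq> S" and p: "p \<in> S" "(\<phi> ^^ N) p = p" "0 < N"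
    and "contracting_at S (\<phi> ^^ N) p" "\<eta> > 0"
  obtains \<sigma> where "\<sigma> > 0" "\<And>z k. z \<in> S \<Longrightarrow> dist z p < \<sigma> \<Longrightarrow> dist ((\<phi> ^^ k) z) ((\<phi> ^^ k) p) < \<eta>"
proof -
  obtain \<rho> l where "\<rho> > 0" "0 \<le> l" "l < 1"
    and contr: "\<forall>z\<in>S. dist z p < \<rho> \<longrightarrow> dist ((\<phi> ^^ N) z) p \<le> l * dist z p"
    using assms(6) unfolding contracting_at_def by blast
  have \<phi>N: "(\<phi> ^^ N) ` S \<subseteq> S"
    using \<phi>(2) by (induction N) auto
  obtain d where "d > 0"
    and d: "\<And>z r. z \<in> S \<Longrightarrow> dist z p < d \<Longrightarrow> r < N \<Longrightarrow> dist ((\<phi> ^^ r) z) ((\<phi> ^^ r) p) < \<eta>"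
    using funpow_near_finitely_many[OF \<phi> p(1) \<open>\<eta> > 0\<close>] by blast
  have "dist ((\<phi> ^^ k) z) ((\<phi> ^^ k) p) < \<eta>" if z: "z \<in> S" "dist z p < min d \<rho>" for z k
  proof -
    define u where "u = ((\<phi> ^^ N) ^^ (k div N)) z"
    have "u \<in> S \<and> dist u p \<le> l ^ (k div N) * dist z p"
      unfolding u_def using contracting_funpow_dist[OF \<phi>N \<open>0 \<le> l\<close> _ contr] z \<open>l < 1\<close> by simp
    moreover have "l ^ (k div N) * dist z p \<le> dist z p"
      using \<open>0 \<le> l\<close> \<open>l < 1\<close> by (simp add: mult_left_le_one_le power_le_one)
    ultimately have u: "u \<in> S" "dist u p < d"
      using z by auto
    have "(\<phi> ^^ k) z = (\<phi> ^^ (k mod N + N * (k div N))) z"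
      by simp
    also have "\<dots> = (\<phi> ^^ (k mod N)) u"
      by (simp only: u_def funpow_add funpow_mult o_apply)
    finally have "(\<phi> ^^ k) z = (\<phi> ^^ (k mod N)) u" .
    moreover have "(\<phi> ^^ k) p = (\<phi> ^^ (k mod N)) p"
      using funpow_mod_eq[OF p(2), of k] by simp
    ultimately show ?thesis
      using d[OF u, of "k mod N"] \<open>0 < N\<close> by simp
  qed
  moreover have "min d \<rho> > 0"
    using \<open>d > 0\<close> \<open>\<rho> > 0\<close> by simp
  ultimately show ?thesis
    using that by blast
qed

section \<open>Sources and sinks of Morse-Smale circle diffeomorphisms\<close>

lemma image_funpow_eq: "\<phi> ` S = S \<Longrightarrow> (\<phi> ^^ m) ` S = S"
proof (induction m)
  case (Suc m)
  have "(\<phi> ^^ Suc m) ` S = \<phi> ` (\<phi> ^^ m) ` S"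
    by (simp add: image_image)
  then show ?case
    using Suc by simp
qed simp

lemma uniform_hitting_time:
  assumes "compact S" "continuous_on S \<phi>" "\<phi> ` S \<subseteq> S" "open V"
    and hit: "\<And>z. z \<in> S \<Longrightarrow> \<exists>m. (\<phi> ^^ m) z \<in> V"
  obtains M where "\<And>z. z \<in> S \<Longrightarrow> \<exists>m\<le>M. (\<phi> ^^ m) z \<in> V"
proof -
  have "\<forall>m. \<exists>U. open U \<and> U \<inter> S = (\<phi> ^^ m) -` V \<inter> S"
    using continuous_on_funpow[OF assms(2,3)] assms(4) by (simp add: continuous_on_open_invariant)
  then obtain U where "\<forall>m. open (U m) \<and> U m \<inter> S = (\<phi> ^^ m) -` V \<inter> S"
    by (auto dest!: choice)
  then have U_open: "open (U m)" and U_eq: "U m \<inter> S = (\<phi> ^^ m) -` V \<inter> S" for m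
    by auto
  have cover_all: "S \<subseteq> (\<Union>m. U m)"
  proof
    fix z assume "z \<in> S"
    then obtain m where "(\<phi> ^^ m) z \<in> V"
      using hit by blast
    then have "z \<in> U m \<inter> S"
      using \<open>z \<in> S\<close> by (simp add: U_eq)
    then show "z \<in> (\<Union>m. U m)"
      by blast
  qed
  obtain M' where "M' \<subseteq> UNIV" "finite M'" and cover: "S \<subseteq> (\<Union>m\<in>M'. U m)"
    by (rule compactE_image[OF assms(1) U_open cover_all])
  have "\<exists>m\<le>Max (insert 0 M'). (\<phi> ^^ m) z \<in> V" if z: "z \<in> S" for z
  proof -
    obtain m where "m \<in> M'" "z \<in> U m"
      using cover z by blast
    then have "m \<le> Max (insert 0 M')" "z \<in> (\<phi> ^^ m) -` V"
      using \<open>finite M'\<close> U_eq[of m] z by auto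
    then show ?thesis
      by blast
  qed
  then show ?thesis
    using that by blast
qed

text \<open>Every point enters, at a uniform time, a region where the contraction keeps it close to
  the attracting orbits forever.\<close>
lemma attracting_cycles_squeeze:
  assumes S: "compact S" and \<phi>: "continuous_on S \<phi>" "\<phi> ` S \<subseteq> S" and "P \<subseteq> S"
    and cyc: "\<And>p. p \<in> P \<Longrightarrow> 0 < N p \<and> (\<phi> ^^ N p) p = p \<and> contracting_at S (\<phi> ^^ N p) p"
    and acc: "\<And>z. z \<in> S \<Longrightarrow> \<exists>p\<in>P. \<forall>e>0. \<exists>m. dist ((\<phi> ^^ m) z) p < e"
    and "\<eta> > 0"
  obtains M where "\<And>z. z \<in> S \<Longrightarrow> \<exists>p\<in>P. \<exists>r. dist ((\<phi> ^^ M) z) ((\<phi> ^^ r) p) < \<eta>"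
proof -
  have "\<forall>p\<in>P. \<exists>\<sigma>>0. \<forall>z k. z \<in> S \<longrightarrow> dist z p < \<sigma> \<longrightarrow> dist ((\<phi> ^^ k) z) ((\<phi> ^^ k) p) < \<eta>"
  proof
    fix p assume "p \<in> P"
    then have p: "p \<in> S" "(\<phi> ^^ N p) p = p" "0 < N p" "contracting_at S (\<phi> ^^ N p) p"
      using cyc \<open>P \<subseteq> S\<close> by auto
    show "\<exists>\<sigma>>0. \<forall>z k. z \<in> S \<longrightarrow> dist z p < \<sigma> \<longrightarrow> dist ((\<phi> ^^ k) z) ((\<phi> ^^ k) p) < \<eta>"
      by (rule contracting_periodic_orbit_stable[OF \<phi> p \<open>\<eta> > 0\<close>]) auto
  qed
  then obtain \<sigma> where \<sigma>: "\<forall>p\<in>P. \<sigma> p > 0 \<and>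
      (\<forall>z k. z \<in> S \<longrightarrow> dist z p < \<sigma> p \<longrightarrow> dist ((\<phi> ^^ k) z) ((\<phi> ^^ k) p) < \<eta>)"
    by (auto dest!: bchoice)
  define V where "V = (\<Union>p\<in>P. ball p (\<sigma> p))"
  have "open V"
    unfolding V_def by (intro open_UN ballI open_ball)
  have hit: "\<exists>m. (\<phi> ^^ m) z \<in> V" if z: "z \<in> S" for z
  proof -
    obtain p where "p \<in> P" "\<forall>e>0. \<exists>m. dist ((\<phi> ^^ m) z) p < e"
      using acc z by blast
    then obtain m where "dist ((\<phi> ^^ m) z) p < \<sigma> p"
      using \<sigma> by blast
    then show ?thesis
      using \<open>p \<in> P\<close> by (auto simp: V_def dist_commute)
  qed
  obtain M where M: "\<And>z. z \<in> S \<Longrightarrow> \<exists>m\<le>M. (\<phi> ^^ m) z \<in> V"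
    using uniform_hitting_time[OF S \<phi> \<open>open V\<close> hit] by blast
  have "\<exists>p\<in>P. \<exists>r. dist ((\<phi> ^^ M) z) ((\<phi> ^^ r) p) < \<eta>" if z: "z \<in> S" for z
  proof -
    obtain m where "m \<le> M" "(\<phi> ^^ m) z \<in> V"
      using M z by blast
    then obtain p where p: "p \<in> P" "dist ((\<phi> ^^ m) z) p < \<sigma> p"
      by (auto simp: V_def dist_commute)
    have "(\<phi> ^^ m) z \<in> S"
      using z \<phi>(2) by (induction m) auto
    moreover have "(\<phi> ^^ M) z = (\<phi> ^^ (M - m)) ((\<phi> ^^ m) z)"
      using \<open>m \<le> M\<close> by (simp add: funpow_add[symmetric, THEN fun_cong, unfolded o_apply])
    ultimately have "dist ((\<phi> ^^ M) z) ((\<phi> ^^ (M - m)) p) < \<eta>"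
      using \<sigma> p by simp
    then show ?thesis
      using p(1) by blast
  qed
  then show ?thesis
    using that by blast
qed

lemma attracting_cycles_not_global:
  assumes S: "compact S" "infinite S" and \<phi>: "continuous_on S \<phi>" "\<phi> ` S = S"
    and P: "finite P" "P \<subseteq> S"
    and cyc: "\<And>p. p \<in> P \<Longrightarrow> 0 < N p \<and> (\<phi> ^^ N p) p = p \<and> contracting_at S (\<phi> ^^ N p) p"
    and acc: "\<And>z. z \<in> S \<Longrightarrow> \<exists>p\<in>P. \<forall>e>0. \<exists>m. dist ((\<phi> ^^ m) z) p < e"
  shows False
proof -
  define C where "C = (\<Union>p\<in>P. (\<lambda>r. (\<phi> ^^ r) p) ` {..<N p})"
  have orbit_in_C: "(\<phi> ^^ r) p \<in> C" if "p \<in> P" for p r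
  proof -
    have "(\<phi> ^^ r) p \<in> (\<lambda>r. (\<phi> ^^ r) p) ` {..<N p}"
      using cyc[OF that] by (intro rev_image_eqI[of "r mod N p"]) (auto simp: funpow_mod_eq)
    then show ?thesis
      using that unfolding C_def by blast
  qed
  have "finite C"
    using P(1) by (simp add: C_def)
  then have "S - C \<noteq> {}"
    using S(2) by (meson Diff_eq_empty_iff finite_subset)
  then obtain w where w: "w \<in> S" "w \<notin> C"
    by blast
  then obtain p0 where "p0 \<in> P"
    using acc by blast
  define \<eta> where "\<eta> = infdist w C"
  have "\<eta> > 0"
    unfolding \<eta>_def using w \<open>finite C\<close> orbit_in_C[OF \<open>p0 \<in> P\<close>]
    by (intro infdist_pos_not_in_closed finite_imp_closed) auto
  obtain M where M: "\<And>z. z \<in> S \<Longrightarrow> \<exists>p\<in>P. \<exists>r. dist ((\<phi> ^^ M) z) ((\<phi> ^^ r) p) < \<eta>"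
    using attracting_cycles_squeeze[OF S(1) \<phi>(1) _ P(2) cyc acc \<open>\<eta> > 0\<close>] \<phi>(2) by blast
  have "w \<in> (\<phi> ^^ M) ` S"
    using image_funpow_eq[OF \<phi>(2)] w(1) by simp
  then obtain p r where "p \<in> P" "dist w ((\<phi> ^^ r) p) < \<eta>"
    using M by blast
  then have "infdist w C < \<eta>"
    using infdist_le[OF orbit_in_C] le_less_trans by blast
  then show False
    by (simp add: \<eta>_def)
qed

lemma accumulates_at_nonwandering:
  fixes x :: "nat \<Rightarrow> complex"
  assumes x: "\<And>m. x m \<in> S1"
    and link: "\<And>i j. i < j \<Longrightarrow> \<exists>n\<ge>1. (f ^^ n) (x i) = x j \<or> (f ^^ n) (x j) = x i"
  shows "\<exists>l\<in>nonwandering f. \<forall>e>0. \<exists>m. dist (x m) l < e"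
proof -
  obtain l r where "l \<in> S1" "strict_mono r" and "(x \<circ> r) \<longlonglongrightarrow> l"
    using seq_compactE[OF compact_imp_seq_compact[OF compact_S1]] x by blast
  then have lim: "(\<lambda>i. x (r i)) \<longlonglongrightarrow> l"
    by (simp add: o_def)
  have "l \<in> nonwandering f"
    unfolding nonwandering_def
  proof (intro CollectI conjI allI impI \<open>l \<in> S1\<close>)
    fix U assume "open U \<and> l \<in> U"
    then obtain I where I: "\<And>i. i \<ge> I \<Longrightarrow> x (r i) \<in> U"
      using topological_tendstoD[OF lim] unfolding eventually_sequentially by blast
    have a: "x (r I) \<in> U \<inter> S1" and b: "x (r (Suc I)) \<in> U \<inter> S1"
      using I[of I] I[of "Suc I"] x by auto
    obtain n where "n \<ge> 1" and "(f ^^ n) (x (r I)) = x (r (Suc I)) \<or> (f ^^ n) (x (r (Suc I))) = x (r I)"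
      using link[of "r I" "r (Suc I)"] \<open>strict_mono r\<close> by (auto simp: strict_mono_def)
    then have "(f ^^ n) ` (U \<inter> S1) \<inter> (U \<inter> S1) \<noteq> {}"
      using a b by (auto intro: rev_image_eqI)
    then show "\<exists>n\<ge>1. (f ^^ n) ` (U \<inter> S1) \<inter> (U \<inter> S1) \<noteq> {}"
      using \<open>n \<ge> 1\<close> by blast
  qed
  moreover have "\<exists>m. dist (x m) l < e" if "e > 0" for e
    using tendstoD[OF lim that] unfolding eventually_sequentially by blast
  ultimately show ?thesis
    by blast
qed

locale circle_diffeo =
  fixes f :: "complex \<Rightarrow> complex"
  assumes circle_C1_diffeo: "circle_C1_diffeo f"
begin

abbreviation finv :: "complex \<Rightarrow> complex" where
  "finv \<equiv> inv_into S1 f"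

lemma bij_betw_f: "bij_betw f S1 S1"
  using circle_C1_diffeo by (simp add: circle_C1_diffeo_def)

lemma f_image_S1: "f ` S1 = S1"
  using bij_betw_f by (simp add: bij_betw_def)

lemma finv_image_S1: "finv ` S1 = S1"
  using bij_betw_inv_into[OF bij_betw_f] by (simp add: bij_betw_def)

lemma funpow_f_in_S1: "z \<in> S1 \<Longrightarrow> (f ^^ n) z \<in> S1"
  using bij_betw_funpow[OF bij_betw_f] by (rule bij_betw_apply)

lemma funpow_finv_in_S1: "z \<in> S1 \<Longrightarrow> (finv ^^ n) z \<in> S1"
  using bij_betw_funpow[OF bij_betw_inv_into[OF bij_betw_f]] by (rule bij_betw_apply)

lemma funpow_f_finv: "z \<in> S1 \<Longrightarrow> (f ^^ n) ((finv ^^ n) z) = z"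
proof (induction n arbitrary: z)
  case (Suc n)
  have "(f ^^ Suc n) ((finv ^^ Suc n) z) = f ((f ^^ n) ((finv ^^ n) (finv z)))"
    by (simp add: funpow_swap1[where f = finv])
  also have "\<dots> = z"
    using Suc bij_betw_inv_into_right[OF bij_betw_f] bij_betw_apply[OF bij_betw_inv_into[OF bij_betw_f]]
    by simp
  finally show ?case .
qed simp

lemma funpow_finv_f: "z \<in> S1 \<Longrightarrow> (finv ^^ n) ((f ^^ n) z) = z"
proof (induction n arbitrary: z)
  case (Suc n)
  have "(finv ^^ Suc n) ((f ^^ Suc n) z) = finv ((finv ^^ n) ((f ^^ n) (f z)))"
    by (simp add: funpow_swap1[where f = f])
  also have "\<dots> = z"
    using Suc bij_betw_inv_into_left[OF bij_betw_f] bij_betw_apply[OF bij_betw_f]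
    by simp
  finally show ?case .
qed simp

lemma f_differentiable_cis: "(\<lambda>s. f (cis s)) differentiable (at t)"
  using circle_C1_diffeo by (simp add: circle_C1_diffeo_def)

lemma continuous_on_f: "continuous_on S1 f"
  by (intro continuous_on_S1_if_cis differentiable_imp_continuous_within f_differentiable_cis)

lemma continuous_on_finv: "continuous_on S1 finv"
  using continuous_on_inv[OF continuous_on_f compact_S1, of finv] bij_betw_inv_into_left[OF bij_betw_f]
  by (simp add: f_image_S1)

lemma funpow_f_differentiable_cis: "(\<lambda>s. (f ^^ n) (cis s)) differentiable (at t)"
proof (induction n arbitrary: t)
  case 0
  show ?case
    using differentiableI_vector[OF has_vector_derivative_cis] by simp
next
  case (Suc n)
  have "(\<lambda>s. f ((f ^^ n) (cis s))) differentiable (at t)"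
    by (rule S1_map_compose_differentiable[OF funpow_f_in_S1[OF cis_in_S1] Suc f_differentiable_cis])
  then show ?case
    by simp
qed

lemma funpow_f_dist_ratio:
  "p \<in> S1 \<Longrightarrow> ((\<lambda>z. dist ((f ^^ n) z) ((f ^^ n) p) / dist z p) \<longlongrightarrow> \<bar>circ_deriv (f ^^ n) p\<bar>) (at p within S1)"
  by (rule S1_map_dist_ratio[OF _ funpow_f_differentiable_cis]) (auto intro: funpow_f_in_S1)

lemma contracting_at_funpow_f:
  assumes "p \<in> S1" "(f ^^ n) p = p" "\<bar>circ_deriv (f ^^ n) p\<bar> < 1"
  shows "contracting_at S1 (f ^^ n) p"
proof (rule contracting_atI_dist_ratio[where g = "f ^^ n" and c = p, OF assms(2) _ assms(3)])
  show "((\<lambda>z. dist ((f ^^ n) z) p / dist z p) \<longlongrightarrow> \<bar>circ_deriv (f ^^ n) p\<bar>) (at p within S1)"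
    using funpow_f_dist_ratio[OF assms(1), of n] assms(2) by simp
qed

lemma contracting_at_funpow_finv:
  assumes "p \<in> S1" "(f ^^ n) p = p" "\<bar>circ_deriv (f ^^ n) p\<bar> > 1"
  shows "contracting_at S1 (finv ^^ n) p"
proof (rule contracting_at_inverse[where g = "f ^^ n" and c = p, OF assms(2) _ assms(3)])
  show "((\<lambda>z. dist ((f ^^ n) z) p / dist z p) \<longlongrightarrow> \<bar>circ_deriv (f ^^ n) p\<bar>) (at p within S1)"
    using funpow_f_dist_ratio[OF assms(1), of n] assms(2) by simp
  show "continuous_on S1 (finv ^^ n)"
    using continuous_on_funpow[OF continuous_on_finv] finv_image_S1 by simp
  show "(finv ^^ n) p = p"
    using funpow_finv_f[OF assms(1), of n] assms(2) by simp
  show "(finv ^^ n) ` S1 \<subseteq> S1"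
    using funpow_finv_in_S1 by blast
qed (use assms(1) funpow_f_finv in simp_all)

lemma orbit_accumulates_nonwandering:
  "z \<in> S1 \<Longrightarrow> \<exists>l\<in>nonwandering f. \<forall>e>0. \<exists>m. dist ((f ^^ m) z) l < e"
proof (rule accumulates_at_nonwandering)
  fix i j :: nat assume "i < j"
  then have "(f ^^ (j - i)) ((f ^^ i) z) = (f ^^ j) z"
    by (simp add: funpow_add[symmetric, THEN fun_cong, unfolded o_apply])
  then show "\<exists>n\<ge>1. (f ^^ n) ((f ^^ i) z) = (f ^^ j) z \<or> (f ^^ n) ((f ^^ j) z) = (f ^^ i) z"
    using \<open>i < j\<close> by (intro exI[of _ "j - i"]) auto
qed (rule funpow_f_in_S1)

lemma backward_orbit_accumulates_nonwandering:
  "z \<in> S1 \<Longrightarrow> \<exists>l\<in>nonwandering f. \<forall>e>0. \<exists>m. dist ((finv ^^ m) z) l < e"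
proof (rule accumulates_at_nonwandering)
  fix i j :: nat assume "z \<in> S1" "i < j"
  then have "(finv ^^ j) z = (finv ^^ (j - i)) ((finv ^^ i) z)"
    by (simp add: funpow_add[symmetric, THEN fun_cong, unfolded o_apply])
  then have "(f ^^ (j - i)) ((finv ^^ j) z) = (finv ^^ i) z"
    using funpow_f_finv funpow_finv_in_S1 \<open>z \<in> S1\<close> by simp
  then show "\<exists>n\<ge>1. (f ^^ n) ((finv ^^ i) z) = (finv ^^ j) z \<or> (f ^^ n) ((finv ^^ j) z) = (finv ^^ i) z"
    using \<open>i < j\<close> by (intro exI[of _ "j - i"]) auto
qed (rule funpow_finv_in_S1)

end

locale morse_smale_circle_map = circle_diffeo +
  assumes morse_smale: "morse_smale_circle f"
begin

lemma nonwandering_periodic: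
  assumes "p \<in> nonwandering f"
  shows "p \<in> S1" "0 < per f p" "(f ^^ per f p) p = p"
proof -
  have "\<exists>n. n \<ge> 1 \<and> (f ^^ n) p = p"
    using morse_smale assms by (auto simp: morse_smale_circle_def periodic_pt_def)
  then show "0 < per f p" "(f ^^ per f p) p = p"
    unfolding per_def using LeastI_ex[of "\<lambda>n. n \<ge> 1 \<and> (f ^^ n) p = p"] by auto
  show "p \<in> S1"
    using assms by (simp add: nonwandering_def)
qed

lemma nonwandering_hyperbolic: "p \<in> nonwandering f \<Longrightarrow> \<bar>multiplier f p\<bar> \<noteq> 1"
  using morse_smale by (auto simp: morse_smale_circle_def hyperbolic_pt_def)

lemma finite_nonwandering: "finite (nonwandering f)"
  using morse_smale by (simp add: morse_smale_circle_def)

lemma nonwandering_subset_S1: "nonwandering f \<subseteq> S1"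
  by (auto simp: nonwandering_def)

lemma periodic_source_exists: "\<exists>p\<in>nonwandering f. \<bar>multiplier f p\<bar> > 1"
proof (rule ccontr)
  assume "\<not> ?thesis"
  then have "\<bar>circ_deriv (f ^^ per f p) p\<bar> < 1" if "p \<in> nonwandering f" for p
    using nonwandering_hyperbolic[OF that] that by (force simp: multiplier_def)
  then show False
    using nonwandering_periodic contracting_at_funpow_f orbit_accumulates_nonwandering
    by (intro attracting_cycles_not_global[OF compact_S1 infinite_S1 continuous_on_f f_image_S1
          finite_nonwandering nonwandering_subset_S1, of "per f"]) blast+
qed

lemma periodic_sink_exists: "\<exists>q\<in>nonwandering f. \<bar>multiplier f q\<bar> < 1"
proof (rule ccontr)
  assume "\<not> ?thesis"
  then have "\<bar>circ_deriv (f ^^ per f p) p\<bar> > 1" if "p \<in> nonwandering f" for p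
    using nonwandering_hyperbolic[OF that] that by (force simp: multiplier_def)
  moreover have "(finv ^^ per f p) p = p" if "p \<in> nonwandering f" for p
    using funpow_finv_f[OF nonwandering_periodic(1)[OF that]] nonwandering_periodic(3)[OF that]
    by metis
  ultimately show False
    using nonwandering_periodic contracting_at_funpow_finv backward_orbit_accumulates_nonwandering
    by (intro attracting_cycles_not_global[OF compact_S1 infinite_S1 continuous_on_finv finv_image_S1
          finite_nonwandering nonwandering_subset_S1, of "per f"]) blast+
qed

end

section \<open>Hausdorff distance and subcontinua of the circle\<close>

lemma hausdorff_dist_commute: "hausdorff_dist A B = hausdorff_dist B A"
  unfolding hausdorff_dist_def by (rule arg_cong[of _ _ Inf]) auto

lemma hausdorff_dist_le:
  assumes "e > 0" "\<And>a. a \<in> A \<Longrightarrow> infdist a B < e" "\<And>b. b \<in> B \<Longrightarrow> infdist b A < e"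
  shows "hausdorff_dist A B \<le> e"
  unfolding hausdorff_dist_def
proof (rule cInf_lower)
  show "e \<in> {e. e > 0 \<and> A \<subseteq> nbhd B e \<and> B \<subseteq> nbhd A e}"
    using assms by (auto simp: nbhd_def)
  show "bdd_below {e. e > 0 \<and> A \<subseteq> nbhd B e \<and> B \<subseteq> nbhd A e}"
    by (rule bdd_belowI[of _ 0]) auto
qed

lemma hausdorff_dist_self_le: "e > 0 \<Longrightarrow> hausdorff_dist A A \<le> e"
  by (rule hausdorff_dist_le) auto

lemma hausdorff_dist_lessE:
  fixes A B :: "'a::metric_space set"
  assumes "hausdorff_dist A B < e" "bounded (A \<union> B)" "B \<noteq> {}" "a \<in> A"
  obtains b where "b \<in> B" "dist a b < e"
proof -
  let ?E = "{e. e > 0 \<and> A \<subseteq> nbhd B e \<and> B \<subseteq> nbhd A e}"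
  obtain r where r: "\<And>y. y \<in> A \<union> B \<Longrightarrow> dist a y \<le> r"
    using assms(2) unfolding bounded_any_center[of _ a] by blast
  have "infdist y Z < 2 * r + 1" if "y \<in> A \<union> B" "z \<in> Z" "Z \<subseteq> A \<union> B" for y z Z
  proof -
    have "infdist y Z \<le> dist a y + dist a z"
      using infdist_le[OF that(2), of y] dist_triangle3[of y z a] by linarith
    then show ?thesis
      using r[OF that(1)] r[of z] that(2,3) by auto
  qed
  moreover have "r \<ge> 0"
    using r[of a] assms(4) by auto
  ultimately have "2 * r + 1 \<in> ?E"
    using assms(3,4) by (fastforce simp: nbhd_def)
  then obtain e' where "e' \<in> ?E" "e' < e"
    using cInf_lessD[of ?E e] assms(1) unfolding hausdorff_dist_def by blast
  then have "(INF b\<in>B. dist a b) < e"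
    using assms(3,4) by (auto simp: nbhd_def infdist_notempty)
  then show ?thesis
    using cInf_lessD[of "(\<lambda>b. dist a b) ` B" e] assms(3) that by auto
qed

text \<open>A point of \<open>A\<close> within \<open>\<rho>\<close> of \<open>c\<close> would be mapped into \<open>K\<close>, but closer to \<open>c\<close> than \<open>K\<close> is.\<close>
lemma not_mem_hausdorff_close_set:
  fixes A X K :: "'a::metric_space set"
  assumes "hausdorff_dist A X < \<epsilon>" "bounded (A \<union> X)" "A \<noteq> {}" "\<epsilon> \<le> \<rho>"
    and "g ` A \<subseteq> K" "\<And>z. z \<in> A \<Longrightarrow> dist z c < \<rho> \<Longrightarrow> dist (g z) c < infdist c K"
  shows "c \<notin> X"
proof
  assume "c \<in> X"
  moreover have "hausdorff_dist X A < \<epsilon>" "bounded (X \<union> A)"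
    using assms(1,2) by (simp_all add: hausdorff_dist_commute Un_commute)
  ultimately obtain a where a: "a \<in> A" "dist c a < \<epsilon>"
    using hausdorff_dist_lessE assms(3) by metis
  then have "dist (g a) c < infdist c K"
    using assms(4,6) by (simp add: dist_commute)
  moreover have "infdist c K \<le> dist c (g a)"
    using assms(5) a(1) by (intro infdist_le) auto
  ultimately show False
    by (simp add: dist_commute)
qed

lemma continua_image:
  assumes "K \<in> continua S" "continuous_on S g" "g ` S \<subseteq> S"
  shows "g ` K \<in> continua S"
proof -
  have K: "K \<subseteq> S" "K \<noteq> {}" "compact K" "connected K"
    using assms(1) by (auto simp: continua_def)
  then have "continuous_on K g"
    using assms(2) continuous_on_subset by blast
  then show ?thesis
    using K assms(3) compact_continuous_image connected_continuous_image
    unfolding continua_def by blast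
qed

lemma dist_mult_S1: "c \<in> S1 \<Longrightarrow> dist (c * z) (c * w) = dist z w"
  by (simp add: dist_norm right_diff_distrib[symmetric] norm_mult in_S1_iff)

lemma S1_arc_in_continua:
  assumes "c \<in> S1" "a \<le> b"
  shows "(\<lambda>t. c * cis t) ` {a..b} \<in> continua S1"
proof -
  have "(\<lambda>t. c * cis t) ` {a..b} \<subseteq> S1"
    using assms(1) by (auto simp: in_S1_iff norm_mult)
  moreover have "compact ((\<lambda>t. c * cis t) ` {a..b})" "connected ((\<lambda>t. c * cis t) ` {a..b})"
    by (intro compact_continuous_image connected_continuous_image continuous_intros; simp)+
  ultimately show ?thesis
    using assms(2) by (simp add: continua_def)
qed

lemma center_not_in_S1_arc:
  assumes "c \<in> S1" "0 < \<beta>" "\<beta> < pi"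
  shows "c \<notin> (\<lambda>t. c * cis t) ` {\<beta>..2 * pi - \<beta>}"
proof
  assume "c \<in> (\<lambda>t. c * cis t) ` {\<beta>..2 * pi - \<beta>}"
  then obtain t where t: "\<beta> \<le> t" "t \<le> 2 * pi - \<beta>" "c * cis t = c"
    by auto
  then have "cos t = 1"
    using S1_nonzero[OF assms(1)] by (metis cis.sel(1) mult_cancel_left2 one_complex.sel(1))
  then obtain k :: int where k: "t = real_of_int k * 2 * pi"
    using cos_one_2pi_int by blast
  then have "t = real_of_int k * (2 * pi)"
    by simp
  then have "0 < real_of_int k * (2 * pi)" "real_of_int k * (2 * pi) < 1 * (2 * pi)"
    using t(1,2) assms(2) by linarith+
  then have "0 < k" "k < 1"
    using pi_gt_zero by (simp_all add: zero_less_mult_iff mult_less_cancel_right)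
  then show False
    by linarith
qed

lemma S1_minus_arc:
  assumes "c \<in> S1" "0 < \<beta>" "\<beta> < pi" "z \<in> S1" "z \<notin> (\<lambda>t. c * cis t) ` {\<beta>..2 * pi - \<beta>}"
  obtains t where "\<bar>t\<bar> < \<beta>" "z = c * cis t"
proof -
  define t where "t = Arg (z / c)"
  have zc: "z = c * cis t"
    using cis_Arg_S1[OF divide_in_S1[OF assms(4,1)]] S1_nonzero[OF assms(1)] by (simp add: t_def)
  have "- pi < t" "t \<le> pi"
    using Arg_bounded unfolding t_def by auto
  moreover have "cis (t + 2 * pi) = cis t"
    by (simp flip: cis_mult)
  then have "z = c * cis (t + 2 * pi)"
    using zc by simp
  then have "t \<notin> {\<beta>..2 * pi - \<beta>}" "t + 2 * pi \<notin> {\<beta>..2 * pi - \<beta>}"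
    using assms(5) zc by blast+
  ultimately have "\<bar>t\<bar> < \<beta>"
    using assms(2,3) by auto
  then show ?thesis
    using that zc by blast
qed

lemma S1_long_arc:
  assumes c: "c \<in> S1" and "b > 0"
  obtains K w where "K \<in> continua S1" "c \<notin> K" "w \<in> K" "dist w c < b"
    "\<And>z. z \<in> S1 \<Longrightarrow> z \<notin> K \<Longrightarrow> dist z c < b"
proof -
  obtain d where "d > 0" and d: "\<And>t. dist t 0 < d \<Longrightarrow> dist (cis t) (cis 0) < b"
    using continuous_at_eps_delta[THEN iffD1, OF has_vector_derivative_continuous[OF has_vector_derivative_cis, of 0]] \<open>b > 0\<close> by blast
  define \<beta> where "\<beta> = min (d / 2) 1"
  have \<beta>: "0 < \<beta>" "\<beta> < pi" "\<beta> < d"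
    using \<open>d > 0\<close> pi_gt3 by (auto simp: \<beta>_def)
  have near_c: "dist (c * cis t) c < b" if "\<bar>t\<bar> \<le> \<beta>" for t
    using dist_mult_S1[OF c, of "cis t" 1] d[of t] that \<beta>(3) by simp
  show ?thesis
  proof (rule that[of "(\<lambda>t. c * cis t) ` {\<beta>..2 * pi - \<beta>}" "c * cis \<beta>"])
    show "(\<lambda>t. c * cis t) ` {\<beta>..2 * pi - \<beta>} \<in> continua S1"
      using c \<beta>(2) by (intro S1_arc_in_continua) auto
    show "c \<notin> (\<lambda>t. c * cis t) ` {\<beta>..2 * pi - \<beta>}"
      by (rule center_not_in_S1_arc[OF c \<beta>(1,2)])
    show "c * cis \<beta> \<in> (\<lambda>t. c * cis t) ` {\<beta>..2 * pi - \<beta>}"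
      using \<beta>(2) by (intro rev_image_eqI[of \<beta>]) auto
    show "dist (c * cis \<beta>) c < b"
      using near_c \<beta>(1) by simp
    show "dist z c < b" if z: "z \<in> S1" "z \<notin> (\<lambda>t. c * cis t) ` {\<beta>..2 * pi - \<beta>}" for z
    proof -
      obtain t where "\<bar>t\<bar> < \<beta>" "z = c * cis t"
        using S1_minus_arc[OF c \<beta>(1,2) z] by blast
      then show ?thesis
        using near_c by simp
    qed
  qed
qed

lemma continuum_avoiding_point:
  assumes c: "c \<in> S1" and h: "continuous_on S1 h" "h ` S1 = S1" and "\<delta> > 0"
  obtains K where "K \<in> continua S1" "c \<notin> K" "hausdorff_dist S1 (h ` K) \<le> \<delta>"
proof -
  have "\<delta> / 2 > 0"
    using \<open>\<delta> > 0\<close> by simp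
  then obtain b where "b > 0" and b: "\<And>z. z \<in> S1 \<Longrightarrow> dist z c < b \<Longrightarrow> dist (h z) (h c) < \<delta> / 2"
    using h(1) c unfolding continuous_on_iff by blast
  obtain K w where K: "K \<in> continua S1" "c \<notin> K" "w \<in> K" "dist w c < b"
    and outside: "\<And>z. z \<in> S1 \<Longrightarrow> z \<notin> K \<Longrightarrow> dist z c < b"
    using S1_long_arc[OF c \<open>b > 0\<close>] by blast
  have "K \<subseteq> S1"
    using K(1) by (simp add: continua_def)
  have far: "infdist (h z) (h ` K) < \<delta>" if z: "z \<in> S1" "z \<notin> K" for z
  proof -
    have "dist (h z) (h c) < \<delta> / 2"
      using b outside[OF z] z(1) by blast
    moreover have "dist (h w) (h c) < \<delta> / 2"
      using b K(3,4) \<open>K \<subseteq> S1\<close> by blast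
    ultimately show ?thesis
      using infdist_le[OF imageI[OF K(3)], of "h z" h] dist_triangle2[of "h z" "h w" "h c"] by linarith
  qed
  have "infdist a (h ` K) < \<delta>" if "a \<in> S1" for a
  proof (cases "a \<in> h ` K")
    case False
    have "a \<in> h ` S1"
      using that h(2) by simp
    then obtain z where z: "z \<in> S1" "a = h z"
      by blast
    with False have "z \<notin> K"
      by blast
    with z show ?thesis
      using far by simp
  qed (use \<open>\<delta> > 0\<close> in simp)
  moreover have "h ` K \<subseteq> S1"
    using \<open>K \<subseteq> S1\<close> h(2) by blast
  then have "infdist a S1 < \<delta>" if "a \<in> h ` K" for a
    using that \<open>\<delta> > 0\<close> by (simp add: subsetD)
  ultimately have "hausdorff_dist S1 (h ` K) \<le> \<delta>"
    using \<open>\<delta> > 0\<close> by (intro hausdorff_dist_le)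
  with K(1,2) show ?thesis
    using that by blast
qed

section \<open>Separating the circle by two points\<close>

definition chord_side :: "complex \<Rightarrow> complex \<Rightarrow> complex \<Rightarrow> real" where
  "chord_side p q z = Im ((z - p) * cnj (q - p))"

lemma chord_side_eq_0_S1:
  assumes p: "p \<in> S1" and q: "q \<in> S1" and z: "z \<in> S1" and "p \<noteq> q" and "chord_side p q z = 0"
  shows "z = p \<or> z = q"
proof -
  define t where "t = Re ((z - p) / (q - p))"
  have "(z - p) / (q - p) = (z - p) * cnj (q - p) / ((q - p) * cnj (q - p))"
    using \<open>p \<noteq> q\<close> by simp
  also have "\<dots> = (z - p) * cnj (q - p) / of_real ((cmod (q - p))\<^sup>2)"
    by (simp only: complex_norm_square)
  finally have "Im ((z - p) / (q - p)) = chord_side p q z / (cmod (q - p))\<^sup>2"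
    by (simp add: chord_side_def Im_divide_of_real)
  then have "(z - p) / (q - p) = of_real t"
    using \<open>chord_side p q z = 0\<close> by (simp add: complex_eq_iff t_def)
  then have zt: "z = p + of_real t * (q - p)"
    using \<open>p \<noteq> q\<close> by (simp add: field_simps)
  obtain a b c e where pq: "p = Complex a b" "q = Complex c e"
    by (metis complex.exhaust)
  have n1: "a\<^sup>2 + b\<^sup>2 = 1" and n2: "c\<^sup>2 + e\<^sup>2 = 1"
    using p q pq by (simp_all add: in_S1_iff cmod_def)
  have "(a + t * (c - a))\<^sup>2 + (b + t * (e - b))\<^sup>2 = 1"
    using z zt pq by (simp add: in_S1_iff cmod_def)
  then have "t * (t - 1) * ((c - a)\<^sup>2 + (e - b)\<^sup>2) = 0"
    using n1 n2 by algebra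
  moreover have "(c - a)\<^sup>2 + (e - b)\<^sup>2 \<noteq> 0"
    using \<open>p \<noteq> q\<close> pq by (auto simp: sum_power2_eq_zero_iff)
  ultimately have "t = 0 \<or> t = 1"
    by auto
  then show ?thesis
    using zt by auto
qed

lemma abs_Im_mult_cnj_less_dist:
  assumes p: "p \<in> S1" and q: "q \<in> S1" and "p \<noteq> q"
  shows "\<bar>Im (p * cnj q)\<bar> < cmod (q - p)"
proof -
  define L where "L = cmod (q - p)"
  have "L > 0"
    using \<open>p \<noteq> q\<close> by (simp add: L_def)
  obtain a b c e where pq: "p = Complex a b" "q = Complex c e"
    by (metis complex.exhaust)
  have "a\<^sup>2 + b\<^sup>2 = 1" "c\<^sup>2 + e\<^sup>2 = 1"
    using p q pq by (simp_all add: in_S1_iff cmod_def)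
  then have "4 * ((c - a)\<^sup>2 + (e - b)\<^sup>2 - (b * c - a * e)\<^sup>2) = ((c - a)\<^sup>2 + (e - b)\<^sup>2)\<^sup>2"
    by algebra
  moreover have "L\<^sup>2 = (c - a)\<^sup>2 + (e - b)\<^sup>2" "Im (p * cnj q) = b * c - a * e"
    using pq by (simp_all add: L_def cmod_def)
  ultimately have key: "4 * (L\<^sup>2 - (Im (p * cnj q))\<^sup>2) = (L\<^sup>2)\<^sup>2"
    by simp
  have "0 < 4 * (L\<^sup>2 - (Im (p * cnj q))\<^sup>2)"
    unfolding key using \<open>L > 0\<close> by simp
  then have "\<bar>Im (p * cnj q)\<bar>\<^sup>2 < L\<^sup>2"
    by simp
  then show ?thesis
    using \<open>L > 0\<close> power2_less_imp_less[of "\<bar>Im (p * cnj q)\<bar>" L] by (simp add: L_def)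
qed

lemma chord_side_both_signs:
  assumes p: "p \<in> S1" and q: "q \<in> S1" and "p \<noteq> q"
  obtains m1 m2 where "m1 \<in> S1" "m2 \<in> S1" "chord_side p q m1 > 0" "chord_side p q m2 < 0"
proof -
  define d where "d = q - p"
  define L where "L = cmod d"
  define m where "m = \<i> * d / of_real L"
  have "L > 0"
    using \<open>p \<noteq> q\<close> by (simp add: L_def d_def)
  have m: "m \<in> S1" "- m \<in> S1"
    using \<open>L > 0\<close> by (simp_all add: in_S1_iff m_def norm_mult norm_divide L_def)
  have "m * cnj d = \<i> * (d * cnj d) / of_real L"
    by (simp add: m_def)
  also have "\<dots> = \<i> * of_real L"
    using \<open>L > 0\<close> by (simp add: L_def complex_norm_square[symmetric] power2_eq_square)
  finally have md: "m * cnj d = \<i> * of_real L" .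
  have pd: "p * cnj d = p * cnj q - 1"
    using p by (simp add: d_def algebra_simps complex_norm_square[symmetric] in_S1_iff)
  have "(m - p) * cnj d = \<i> * of_real L - (p * cnj q - 1)"
    using md pd by (simp add: algebra_simps)
  moreover have "(- m - p) * cnj d = - (\<i> * of_real L) - (p * cnj q - 1)"
    using md pd by (simp add: algebra_simps)
  ultimately have side: "chord_side p q m = L - Im (p * cnj q)" "chord_side p q (- m) = - L - Im (p * cnj q)"
    by (simp_all add: chord_side_def d_def[symmetric])
  have "\<bar>Im (p * cnj q)\<bar> < L"
    unfolding L_def d_def by (rule abs_Im_mult_cnj_less_dist[OF p q \<open>p \<noteq> q\<close>])
  then show ?thesis
    using that m side by auto
qed

text \<open>The chord through \<open>p\<close> and \<open>q\<close> cuts the circle into two arcs, on which \<open>chord_side p q\<close>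
  has opposite signs; a connected set coming close to every point meets both arcs, so it passes
  through \<open>p\<close> or \<open>q\<close>.\<close>
lemma connected_dense_subset_S1:
  assumes "p \<in> S1" "q \<in> S1" "p \<noteq> q"
  obtains c where "c > 0"
    "\<And>X. X \<subseteq> S1 \<Longrightarrow> connected X \<Longrightarrow> (\<forall>a\<in>S1. \<exists>b\<in>X. dist a b < c) \<Longrightarrow> p \<in> X \<or> q \<in> X"
proof -
  obtain m1 m2 where m: "m1 \<in> S1" "m2 \<in> S1" "chord_side p q m1 > 0" "chord_side p q m2 < 0"
    using chord_side_both_signs[OF assms] by blast
  have cont: "isCont (chord_side p q) x" for x
    unfolding chord_side_def isCont_def by (intro tendsto_intros)
  obtain c1 where "c1 > 0"
    and "\<forall>z. dist z m1 < c1 \<longrightarrow> dist (chord_side p q z) (chord_side p q m1) < chord_side p q m1"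
    using cont[of m1] m(3) unfolding continuous_at_eps_delta by blast
  then have c1: "chord_side p q z > 0" if "dist z m1 < c1" for z
    using that by (auto simp: dist_real_def)
  obtain c2 where "c2 > 0"
    and "\<forall>z. dist z m2 < c2 \<longrightarrow> dist (chord_side p q z) (chord_side p q m2) < - chord_side p q m2"
    using cont[of m2] m(4) unfolding continuous_at_eps_delta by (meson neg_0_less_iff_less)
  then have c2: "chord_side p q z < 0" if "dist z m2 < c2" for z
    using that by (auto simp: dist_real_def)
  have "p \<in> X \<or> q \<in> X"
    if X: "X \<subseteq> S1" "connected X" "\<forall>a\<in>S1. \<exists>b\<in>X. dist a b < min c1 c2" for X
  proof -
    obtain b1 b2 where "b1 \<in> X" "b2 \<in> X" "dist m1 b1 < min c1 c2" "dist m2 b2 < min c1 c2"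
      using X(3) m(1,2) by blast
    then have b: "b1 \<in> X" "b2 \<in> X" "chord_side p q b1 > 0" "chord_side p q b2 < 0"
      using c1 c2 by (simp_all add: dist_commute)
    have "connected (chord_side p q ` X)"
      using X(2) cont by (intro connected_continuous_image continuous_at_imp_continuous_on) auto
    then have "{chord_side p q b2..chord_side p q b1} \<subseteq> chord_side p q ` X"
      using b(1,2) by (intro connected_contains_Icc) auto
    moreover have "0 \<in> {chord_side p q b2..chord_side p q b1}"
      using b(3,4) by simp
    ultimately obtain z where "z \<in> X" "chord_side p q z = 0"
      by (metis imageE subsetD)
    then show ?thesis
      using chord_side_eq_0_S1[OF assms(1,2) _ assms(3)] X(1) by blast
  qed
  moreover have "min c1 c2 > 0"
    using \<open>c1 > 0\<close> \<open>c2 > 0\<close> by simp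
  ultimately show ?thesis
    using that by blast
qed

section \<open>Failure of shadowing\<close>

lemma funpow_image:
  fixes g :: "'a \<Rightarrow> 'a"
  shows "((\<lambda>A. g ` A) ^^ k) A = (g ^^ k) ` A"
proof (induction k)
  case (Suc k)
  have "((\<lambda>A. g ` A) ^^ Suc k) A = g ` ((g ^^ k) ` A)"
    using Suc by simp
  also have "\<dots> = (g ^^ Suc k) ` A"
    by (simp add: image_comp)
  finally show ?case .
qed simp

lemma iter_int_image_of_nat: "iter_int Y (\<lambda>A. g ` A) (int k) A = (g ^^ k) ` A"
  by (simp add: iter_int_def funpow_image)

context circle_diffeo
begin

definition jump_orbit :: "nat \<Rightarrow> complex set \<Rightarrow> complex set \<Rightarrow> int \<Rightarrow> complex set" where
  "jump_orbit T K L n =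
     (if n < int T then (finv ^^ nat (int T - n)) ` K
      else if n = int T then S1 else (f ^^ nat (n - int T)) ` L)"

lemma jump_orbit_in_continua:
  assumes "K \<in> continua S1" "L \<in> continua S1"
  shows "jump_orbit T K L n \<in> continua S1"
proof -
  have "(finv ^^ k) ` K \<in> continua S1" "(f ^^ k) ` L \<in> continua S1" for k
    using assms finv_image_S1 f_image_S1 funpow_finv_in_S1 funpow_f_in_S1
    by (auto intro!: continua_image continuous_on_funpow continuous_on_f continuous_on_finv)
  then show ?thesis
    using S1_in_continua by (simp add: jump_orbit_def)
qed

lemma jump_orbit_pseudo_orbit:
  assumes "K \<subseteq> S1" "hausdorff_dist S1 K \<le> \<delta>" "hausdorff_dist S1 (f ` L) \<le> \<delta>" "\<delta> > 0"
  shows "hausdorff_dist (f ` jump_orbit T K L n) (jump_orbit T K L (n + 1)) \<le> \<delta>"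
proof -
  have f_finv_image: "f ` (finv ^^ Suc k) ` K = (finv ^^ k) ` K" for k
  proof -
    have "f ((finv ^^ Suc k) z) = (finv ^^ k) z" if "z \<in> K" for z
      using bij_betw_inv_into_right[OF bij_betw_f] funpow_finv_in_S1 that assms(1) by auto
    then show ?thesis
      by (simp add: image_image cong: image_cong)
  qed
  consider "n + 1 < int T" | "n + 1 = int T" | "n = int T" | "n > int T"
    by linarith
  then show ?thesis
  proof cases
    case 1
    then have "nat (int T - n) = Suc (nat (int T - (n + 1)))"
      by simp
    then show ?thesis
      using 1 f_finv_image hausdorff_dist_self_le[OF \<open>\<delta> > 0\<close>] by (simp add: jump_orbit_def)
  next
    case 2
    then have "nat (int T - n) = Suc 0"
      by simp
    then show ?thesis
      using 2 f_finv_image[of 0] assms(2) by (simp add: jump_orbit_def hausdorff_dist_commute)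
  next
    case 3
    then show ?thesis
      using assms(3) by (simp add: jump_orbit_def f_image_S1)
  next
    case 4
    then have "nat (n + 1 - int T) = Suc (nat (n - int T))"
      by simp
    then show ?thesis
      using 4 hausdorff_dist_self_le[OF \<open>\<delta> > 0\<close>] by (simp add: jump_orbit_def image_image)
  qed
qed

lemma jump_orbit_shadowed:
  assumes "shadowing (continua S1) hausdorff_dist (\<lambda>A. f ` A)" "\<epsilon> > 0"
  obtains \<delta> where "\<delta> > 0"
    "\<And>K L T P. K \<in> continua S1 \<Longrightarrow> L \<in> continua S1 \<Longrightarrow> hausdorff_dist S1 K \<le> \<delta> \<Longrightarrow>
      hausdorff_dist S1 (f ` L) \<le> \<delta> \<Longrightarrow> 0 < T \<Longrightarrow> 0 < P \<Longrightarrow>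
      \<exists>x\<in>continua S1. hausdorff_dist ((finv ^^ T) ` K) x < \<epsilon> \<and> hausdorff_dist S1 ((f ^^ T) ` x) < \<epsilon>
        \<and> hausdorff_dist ((f ^^ P) ` L) ((f ^^ P) ` (f ^^ T) ` x) < \<epsilon>"
proof -
  obtain \<delta> where "\<delta> > 0" and \<delta>: "\<forall>y. (\<forall>n. y n \<in> continua S1) \<and>
      (\<forall>n. hausdorff_dist (f ` y n) (y (n + 1)) \<le> \<delta>) \<longrightarrow>
      (\<exists>x\<in>continua S1. \<forall>n. hausdorff_dist (y n) (iter_int (continua S1) (\<lambda>A. f ` A) n x) < \<epsilon>)"
    using assms unfolding shadowing_def by blast
  have "\<exists>x\<in>continua S1. hausdorff_dist ((finv ^^ T) ` K) x < \<epsilon> \<and> hausdorff_dist S1 ((f ^^ T) ` x) < \<epsilon>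
        \<and> hausdorff_dist ((f ^^ P) ` L) ((f ^^ P) ` (f ^^ T) ` x) < \<epsilon>"
    if K: "K \<in> continua S1" "hausdorff_dist S1 K \<le> \<delta>" and L: "L \<in> continua S1" "hausdorff_dist S1 (f ` L) \<le> \<delta>"
      and "0 < T" "0 < P" for K L T P
  proof -
    have "\<forall>n. jump_orbit T K L n \<in> continua S1"
      using jump_orbit_in_continua[OF K(1) L(1)] by blast
    moreover have "\<forall>n. hausdorff_dist (f ` jump_orbit T K L n) (jump_orbit T K L (n + 1)) \<le> \<delta>"
      using jump_orbit_pseudo_orbit[OF _ K(2) L(2) \<open>\<delta> > 0\<close>] K(1) by (simp add: continua_def)
    ultimately obtain x where "x \<in> continua S1"
      and x: "\<forall>n. hausdorff_dist (jump_orbit T K L n) (iter_int (continua S1) (\<lambda>A. f ` A) n x) < \<epsilon>"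
      using \<delta>[rule_format, of "jump_orbit T K L"] by blast
    have PT: "jump_orbit T K L (int (P + T)) = (f ^^ P) ` L" "(f ^^ (P + T)) ` x = (f ^^ P) ` (f ^^ T) ` x"
      using \<open>0 < P\<close> by (simp_all add: jump_orbit_def funpow_add image_comp)
    have "hausdorff_dist ((finv ^^ T) ` K) x < \<epsilon>"
      using x[rule_format, of 0] \<open>0 < T\<close> by (simp add: jump_orbit_def iter_int_def)
    moreover have "hausdorff_dist S1 ((f ^^ T) ` x) < \<epsilon>"
      using x[rule_format, of "int T"] by (simp add: jump_orbit_def iter_int_image_of_nat)
    moreover have "hausdorff_dist ((f ^^ P) ` L) ((f ^^ P) ` (f ^^ T) ` x) < \<epsilon>"
      using x[rule_format, of "int (P + T)"] PT by (simp only: iter_int_image_of_nat)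
    ultimately show ?thesis
      using \<open>x \<in> continua S1\<close> by blast
  qed
  with \<open>\<delta> > 0\<close> show ?thesis
    using that by blast
qed

end

lemma bounded_subset_S1: "A \<subseteq> S1 \<Longrightarrow> bounded A"
  by (rule bounded_subset[OF compact_imp_bounded[OF compact_S1]])

context circle_diffeo
begin

lemma not_in_image_if_near_backward_image:
  assumes "hausdorff_dist ((finv ^^ T) ` K) X < \<epsilon>" "K \<subseteq> S1" "K \<noteq> {}" "X \<subseteq> S1"
    and "c \<in> S1" "(f ^^ T) c = c"
    and "\<And>z. z \<in> S1 \<Longrightarrow> dist z c < \<epsilon> \<Longrightarrow> dist ((f ^^ T) z) c < infdist c K"
  shows "c \<notin> (f ^^ T) ` X"
proof
  assume "c \<in> (f ^^ T) ` X"
  then obtain a where "a \<in> X" "c = (f ^^ T) a"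
    by blast
  then have "a = (finv ^^ T) ((f ^^ T) c)"
    using funpow_finv_f assms(4,6) by auto
  then have "c \<in> X"
    using funpow_finv_f[OF assms(5)] \<open>a \<in> X\<close> by simp
  moreover have "c \<notin> X"
  proof (rule not_mem_hausdorff_close_set[OF assms(1) _ _ order_refl])
    show "bounded ((finv ^^ T) ` K \<union> X)"
      using assms(2,4) funpow_finv_in_S1 by (intro bounded_subset_S1) auto
    show "(f ^^ T) ` (finv ^^ T) ` K \<subseteq> K"
      using assms(2) funpow_f_finv by auto
  qed (use assms(2,3,7) funpow_finv_in_S1 in auto)
  ultimately show False
    by contradiction
qed

lemma not_in_if_near_forward_image:
  assumes "hausdorff_dist ((f ^^ P) ` L) ((f ^^ P) ` Y) < \<epsilon>" "L \<subseteq> S1" "L \<noteq> {}" "Y \<subseteq> S1"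
    and "(f ^^ P) c = c"
    and "\<And>z. z \<in> S1 \<Longrightarrow> dist z c < \<epsilon> \<Longrightarrow> dist ((finv ^^ P) z) c < infdist c L"
  shows "c \<notin> Y"
proof
  assume "c \<in> Y"
  then have "c \<in> (f ^^ P) ` Y"
    using assms(5) by (metis imageI)
  moreover have "c \<notin> (f ^^ P) ` Y"
  proof (rule not_mem_hausdorff_close_set[OF assms(1) _ _ order_refl])
    show "bounded ((f ^^ P) ` L \<union> (f ^^ P) ` Y)"
      using assms(2,4) funpow_f_in_S1 by (intro bounded_subset_S1) auto
    show "(finv ^^ P) ` (f ^^ P) ` L \<subseteq> L"
      using assms(2) funpow_finv_f by auto
  qed (use assms(2,3,6) funpow_f_in_S1 in auto)
  ultimately show False
    by contradiction
qed

lemma shadowing_dense_continuum_avoiding: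
  assumes sh: "shadowing (continua S1) hausdorff_dist (\<lambda>A. f ` A)" and "\<epsilon> > 0"
    and p: "p \<in> S1" "0 < m" "(finv ^^ m) p = p"
    and attr_p: "\<And>r. r > 0 \<Longrightarrow> \<forall>\<^sub>F j in sequentially. \<forall>z\<in>S1. dist z p < \<epsilon> \<longrightarrow> dist (((finv ^^ m) ^^ j) z) p < r"
    and q: "q \<in> S1" "0 < n" "(f ^^ n) q = q"
    and attr_q: "\<And>r. r > 0 \<Longrightarrow> \<forall>\<^sub>F j in sequentially. \<forall>z\<in>S1. dist z q < \<epsilon> \<longrightarrow> dist (((f ^^ n) ^^ j) z) q < r"
  shows "\<exists>X\<in>continua S1. p \<notin> X \<and> q \<notin> X \<and> (\<forall>a\<in>S1. \<exists>b\<in>X. dist a b < \<epsilon>)"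
proof -
  obtain \<delta> where "\<delta> > 0" and shadow: "\<And>K L T P. K \<in> continua S1 \<Longrightarrow> L \<in> continua S1 \<Longrightarrow>
      hausdorff_dist S1 K \<le> \<delta> \<Longrightarrow> hausdorff_dist S1 (f ` L) \<le> \<delta> \<Longrightarrow> 0 < T \<Longrightarrow> 0 < P \<Longrightarrow>
      \<exists>x\<in>continua S1. hausdorff_dist ((finv ^^ T) ` K) x < \<epsilon> \<and> hausdorff_dist S1 ((f ^^ T) ` x) < \<epsilon>
        \<and> hausdorff_dist ((f ^^ P) ` L) ((f ^^ P) ` (f ^^ T) ` x) < \<epsilon>"
    using jump_orbit_shadowed[OF sh \<open>\<epsilon> > 0\<close>] by blast
  obtain K where K: "K \<in> continua S1" "q \<notin> K" "hausdorff_dist S1 K \<le> \<delta>"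
    using continuum_avoiding_point[OF q(1) continuous_on_id _ \<open>\<delta> > 0\<close>] by auto
  obtain L where L: "L \<in> continua S1" "p \<notin> L" "hausdorff_dist S1 (f ` L) \<le> \<delta>"
    using continuum_avoiding_point[OF p(1) continuous_on_f f_image_S1 \<open>\<delta> > 0\<close>] by blast
  have KL: "K \<subseteq> S1" "K \<noteq> {}" "closed K" "L \<subseteq> S1" "L \<noteq> {}" "closed L"
    using K(1) L(1) by (auto simp: continua_def compact_imp_closed)
  obtain T where T: "0 < T" "(f ^^ T) q = q"
    "\<And>z. z \<in> S1 \<Longrightarrow> dist z q < \<epsilon> \<Longrightarrow> dist ((f ^^ T) z) q < infdist q K"
    using uniform_attraction_escape_time[OF attr_q q(3,2) KL(3,2) K(2)] by blast
  obtain P where P: "0 < P" "(finv ^^ P) p = p"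
    "\<And>z. z \<in> S1 \<Longrightarrow> dist z p < \<epsilon> \<Longrightarrow> dist ((finv ^^ P) z) p < infdist p L"
    using uniform_attraction_escape_time[OF attr_p p(3,2) KL(6,5) L(2)] by blast
  have "(f ^^ P) p = p"
    using funpow_f_finv[OF p(1), of P] P(2) by simp
  obtain x where x: "x \<in> continua S1" "hausdorff_dist ((finv ^^ T) ` K) x < \<epsilon>"
      "hausdorff_dist S1 ((f ^^ T) ` x) < \<epsilon>" "hausdorff_dist ((f ^^ P) ` L) ((f ^^ P) ` (f ^^ T) ` x) < \<epsilon>"
    using shadow[OF K(1) L(1) K(3) L(3) T(1) P(1)] by blast
  then have "x \<subseteq> S1" "x \<noteq> {}"
    by (auto simp: continua_def)
  then have fTx: "(f ^^ T) ` x \<subseteq> S1" "(f ^^ T) ` x \<noteq> {}"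
    using funpow_f_in_S1 by auto
  have "q \<notin> (f ^^ T) ` x"
    by (rule not_in_image_if_near_backward_image[OF x(2) KL(1,2) \<open>x \<subseteq> S1\<close> q(1) T(2,3)])
  moreover have "p \<notin> (f ^^ T) ` x"
    by (rule not_in_if_near_forward_image[OF x(4) KL(4,5) fTx(1) \<open>(f ^^ P) p = p\<close> P(3)])
  moreover have "(f ^^ T) ` x \<in> continua S1"
    using x(1) f_image_S1 funpow_f_in_S1
    by (auto intro!: continua_image continuous_on_funpow continuous_on_f)
  moreover have "\<exists>b\<in>(f ^^ T) ` x. dist a b < \<epsilon>" if "a \<in> S1" for a
    using hausdorff_dist_lessE[OF x(3) bounded_subset_S1 fTx(2) that] fTx(1) by blast
  ultimately show ?thesis
    by blast
qed

lemma not_shadowing_if_source_and_sink: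
  assumes "p \<noteq> q"
    and p: "p \<in> S1" "0 < m" "(f ^^ m) p = p" "contracting_at S1 (finv ^^ m) p"
    and q: "q \<in> S1" "0 < n" "(f ^^ n) q = q" "contracting_at S1 (f ^^ n) q"
  shows "\<not> shadowing (continua S1) hausdorff_dist (\<lambda>A. f ` A)"
proof
  assume sh: "shadowing (continua S1) hausdorff_dist (\<lambda>A. f ` A)"
  have "(finv ^^ m) ` S1 \<subseteq> S1" "(f ^^ n) ` S1 \<subseteq> S1"
    using funpow_finv_in_S1 funpow_f_in_S1 by blast+
  obtain \<rho>p where "\<rho>p > 0"
    and attr_p: "\<And>r. r > 0 \<Longrightarrow> \<forall>\<^sub>F j in sequentially. \<forall>z\<in>S1. dist z p < \<rho>p \<longrightarrow> dist (((finv ^^ m) ^^ j) z) p < r"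
    using contracting_at_uniform_attraction[OF p(4) \<open>(finv ^^ m) ` S1 \<subseteq> S1\<close>] by blast
  obtain \<rho>q where "\<rho>q > 0"
    and attr_q: "\<And>r. r > 0 \<Longrightarrow> \<forall>\<^sub>F j in sequentially. \<forall>z\<in>S1. dist z q < \<rho>q \<longrightarrow> dist (((f ^^ n) ^^ j) z) q < r"
    using contracting_at_uniform_attraction[OF q(4) \<open>(f ^^ n) ` S1 \<subseteq> S1\<close>] by blast
  obtain c where "c > 0" and sep: "\<And>X. X \<subseteq> S1 \<Longrightarrow> connected X \<Longrightarrow> (\<forall>a\<in>S1. \<exists>b\<in>X. dist a b < c) \<Longrightarrow> p \<in> X \<or> q \<in> X"
    using connected_dense_subset_S1[OF p(1) q(1) \<open>p \<noteq> q\<close>] by blast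
  define \<epsilon> where "\<epsilon> = min c (min \<rho>p \<rho>q)"
  have "\<epsilon> > 0"
    using \<open>c > 0\<close> \<open>\<rho>p > 0\<close> \<open>\<rho>q > 0\<close> by (simp add: \<epsilon>_def)
  have "(finv ^^ m) p = p"
    using funpow_finv_f[OF p(1), of m] p(3) by simp
  obtain X where "X \<in> continua S1" "p \<notin> X" "q \<notin> X" "\<forall>a\<in>S1. \<exists>b\<in>X. dist a b < \<epsilon>"
  proof (rule bexE[OF shadowing_dense_continuum_avoiding[OF sh \<open>\<epsilon> > 0\<close> p(1,2) \<open>(finv ^^ m) p = p\<close> _ q(1-3)]])
    show "\<forall>\<^sub>F j in sequentially. \<forall>z\<in>S1. dist z p < \<epsilon> \<longrightarrow> dist (((finv ^^ m) ^^ j) z) p < r" if "r > 0" for r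
      using attr_p[OF that] by eventually_elim (auto simp: \<epsilon>_def)
    show "\<forall>\<^sub>F j in sequentially. \<forall>z\<in>S1. dist z q < \<epsilon> \<longrightarrow> dist (((f ^^ n) ^^ j) z) q < r" if "r > 0" for r
      using attr_q[OF that] by eventually_elim (auto simp: \<epsilon>_def)
  qed (use that in blast)
  then show False
    using sep[of X] by (force simp: continua_def \<epsilon>_def)
qed

end

theorem theoremA:
  fixes f :: "complex \<Rightarrow> complex"
  assumes "morse_smale_circle f"
  shows "\<not> shadowing (continua S1) hausdorff_dist (\<lambda>A. f ` A)"
proof -
  interpret morse_smale_circle_map f
    using assms by unfold_locales (simp_all add: morse_smale_circle_def)
  obtain p where p: "p \<in> nonwandering f" "\<bar>multiplier f p\<bar> > 1"
    using periodic_source_exists by blast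
  obtain q where q: "q \<in> nonwandering f" "\<bar>multiplier f q\<bar> < 1"
    using periodic_sink_exists by blast
  note per_p = nonwandering_periodic[OF p(1)] and per_q = nonwandering_periodic[OF q(1)]
  show ?thesis
  proof (rule not_shadowing_if_source_and_sink[where p = p and q = q and m = "per f p" and n = "per f q"])
    show "p \<noteq> q"
      using p(2) q(2) by auto
    show "p \<in> S1" "0 < per f p" "(f ^^ per f p) p = p" "q \<in> S1" "0 < per f q" "(f ^^ per f q) q = q"
      using per_p per_q by simp_all
    show "contracting_at S1 (finv ^^ per f p) p"
      using contracting_at_funpow_finv per_p p(2) by (simp add: multiplier_def)
    show "contracting_at S1 (f ^^ per f q) q"
      using contracting_at_funpow_f per_q q(2) by (simp add: multiplier_def)
  qed
qed

end
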